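(* Let $R$ be a semiprimary ring. Then $R$ is rigid if and only if the dual $\mathring{\mathbf{I}}^{\mathscr{J}}$ of the Jacobson system of $R$ equals the Jacobson system of $R^{\mathrm{op}}$.
   Context: A ring $R$ is semiprimary if its Jacobson radical $\mathscr{J}$ is nilpotent and $R/\mathscr{J}$ is semisimple; its Loewy length $d$ is the nilpotency index of $\mathscr{J}$ (same for $R^{\mathrm{op}}$, whose Jacobson radical is $\mathscr{J}$), and $\mathscr{J}^0=R$. The Jacobson system of $R$ is $I^{\mathscr{J}}_{ij}:=\{x\in R\mid x\mathscr{J}^{d+1-j}\subset\mathscr{J}^{d+1-i}\}$ for $1\le i,j\le d+1$; the Jacobson system of $R^{\mathrm{op}}$ is defined in the same way using the multiplication of $R^{\mathrm{op}}$, i.e. $\{x\in R\mid \mathscr{J}^{d+1-j}x\subset\mathscr{J}^{d+1-i}\}$. For a $d$-system $\mathbf{I}$ of ideals in $R$, its dual is the system of ideals in $R^{\mathrm{op}}$ given by $\mathring{I}_{ij}:=I_{d+2-j,d+2-i}$. A finite-length module is rigid if it has exactly one Loewy filtration (a semisimple filtration of minimal length); $R$ is rigid if both ${}_RR$ and $R_R$ are rigid. *)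

theory Defs
  imports Main
begin

text \<open>Submodules of the left regular module are left ideals, submodules of the
right regular module are right ideals.\<close>

definition left_ideal :: "'a::ring_1 set \<Rightarrow> bool" where
  "left_ideal I \<longleftrightarrow> 0 \<in> I \<and> (\<forall>x\<in>I. \<forall>y\<in>I. x + y \<in> I) \<and> (\<forall>x\<in>I. - x \<in> I)
     \<and> (\<forall>r. \<forall>x\<in>I. r * x \<in> I)"

definition right_ideal :: "'a::ring_1 set \<Rightarrow> bool" where
  "right_ideal I \<longleftrightarrow> 0 \<in> I \<and> (\<forall>x\<in>I. \<forall>y\<in>I. x + y \<in> I) \<and> (\<forall>x\<in>I. - x \<in> I)
     \<and> (\<forall>r. \<forall>x\<in>I. x * r \<in> I)"

definition maximal_left_ideal :: "'a::ring_1 set \<Rightarrow> bool" where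
  "maximal_left_ideal M \<longleftrightarrow> left_ideal M \<and> M \<noteq> UNIV \<and>
     (\<forall>N. left_ideal N \<and> M \<subseteq> N \<and> N \<noteq> UNIV \<longrightarrow> N = M)"

definition jacobson :: "'a::ring_1 set" where
  "jacobson = \<Inter> {M. maximal_left_ideal M}"

definition ideal_prod :: "'a::ring_1 set \<Rightarrow> 'a set \<Rightarrow> 'a set" where
  "ideal_prod A B = {x. \<exists>(n::nat) f g. x = (\<Sum>i<n. f i * g i) \<and> (\<forall>i<n. f i \<in> A \<and> g i \<in> B)}"

primrec ideal_pow :: "'a::ring_1 set \<Rightarrow> nat \<Rightarrow> 'a set" where
  "ideal_pow A 0 = UNIV"
| "ideal_pow A (Suc k) = ideal_prod A (ideal_pow A k)"

definition ideal_sum :: "'a::ring_1 set \<Rightarrow> 'a set \<Rightarrow> 'a set" where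
  "ideal_sum A B = {a + b | a b. a \<in> A \<and> b \<in> B}"

text \<open>For submodules A \<subseteq> B (w.r.t. the submodule predicate P), the quotient B/A is
semisimple: every submodule of B/A is a direct summand.\<close>
definition semisimple_quot :: "('a::ring_1 set \<Rightarrow> bool) \<Rightarrow> 'a set \<Rightarrow> 'a set \<Rightarrow> bool" where
  "semisimple_quot P A B \<longleftrightarrow> (\<forall>C. P C \<and> A \<subseteq> C \<and> C \<subseteq> B \<longrightarrow>
     (\<exists>D. P D \<and> A \<subseteq> D \<and> D \<subseteq> B \<and> C \<inter> D = A \<and> ideal_sum C D = B))"

definition semiprimary :: "'a::ring_1 itself \<Rightarrow> bool" where
  "semiprimary _ \<longleftrightarrow> (\<exists>d. ideal_pow (jacobson::'a set) d = {0})
     \<and> semisimple_quot left_ideal (jacobson::'a set) UNIV"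

definition loewy_length_ring :: "'a::ring_1 itself \<Rightarrow> nat" where
  "loewy_length_ring _ = (LEAST d. ideal_pow (jacobson::'a set) d = {0})"

definition ss_filtration :: "('a::ring_1 set \<Rightarrow> bool) \<Rightarrow> nat \<Rightarrow> (nat \<Rightarrow> 'a set) \<Rightarrow> bool" where
  "ss_filtration P n F \<longleftrightarrow> F 0 = {0} \<and> F n = UNIV \<and> (\<forall>i\<le>n. P (F i)) \<and>
     (\<forall>i<n. F i \<subseteq> F (Suc i) \<and> semisimple_quot P (F i) (F (Suc i)))"

definition module_loewy_length :: "('a::ring_1 set \<Rightarrow> bool) \<Rightarrow> nat" where
  "module_loewy_length P = (LEAST n. \<exists>F. ss_filtration P n F)"

definition loewy_filtration :: "('a::ring_1 set \<Rightarrow> bool) \<Rightarrow> (nat \<Rightarrow> 'a set) \<Rightarrow> bool" where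
  "loewy_filtration P F \<longleftrightarrow> (\<exists>G. ss_filtration P (module_loewy_length P) G)
      \<and> ss_filtration P (module_loewy_length P) F"

text \<open>Exactly one Loewy filtration (filtrations compared on their index range).\<close>
definition rigid_module :: "('a::ring_1 set \<Rightarrow> bool) \<Rightarrow> bool" where
  "rigid_module P \<longleftrightarrow> (\<exists>F. loewy_filtration P F) \<and>
     (\<forall>F G. loewy_filtration P F \<and> loewy_filtration P G \<longrightarrow>
        (\<forall>i\<le>module_loewy_length P. F i = G i))"

definition rigid_ring :: "'a::ring_1 itself \<Rightarrow> bool" where
  "rigid_ring _ \<longleftrightarrow> rigid_module (left_ideal :: 'a set \<Rightarrow> bool)
                  \<and> rigid_module (right_ideal :: 'a set \<Rightarrow> bool)"

definition jacobson_system :: "'a::ring_1 itself \<Rightarrow> nat \<Rightarrow> nat \<Rightarrow> 'a set" where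
  "jacobson_system T i j = (let d = loewy_length_ring T in
     {x. (\<lambda>y. x * y) ` ideal_pow (jacobson::'a set) (d + 1 - j)
          \<subseteq> ideal_pow (jacobson::'a set) (d + 1 - i)})"

definition jacobson_system_op :: "'a::ring_1 itself \<Rightarrow> nat \<Rightarrow> nat \<Rightarrow> 'a set" where
  "jacobson_system_op T i j = (let d = loewy_length_ring T in
     {x. (\<lambda>y. y * x) ` ideal_pow (jacobson::'a set) (d + 1 - j)
          \<subseteq> ideal_pow (jacobson::'a set) (d + 1 - i)})"

definition dual_system :: "nat \<Rightarrow> (nat \<Rightarrow> nat \<Rightarrow> 'a set) \<Rightarrow> nat \<Rightarrow> nat \<Rightarrow> 'a set" where
  "dual_system d I i j = I (d + 2 - j) (d + 2 - i)"

end

theory Submission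
  imports Defs
begin

text \<open>Let \<open>J\<close> be the radical, with \<open>J\<^sup>d = 0\<close>. A quotient \<open>B/A\<close> of left ideals is semisimple
  exactly when \<open>J B \<subseteq> A\<close>: one direction because every \<open>1 - j\<close> is a unit, the other because
  \<open>R/J\<close> is semisimple. Hence every semisimple filtration \<open>F\<close> of length \<open>n\<close> of \<open>\<^sub>RR\<close> satisfies
  \<open>J\<^bsup>n-k\<^esup> \<subseteq> F\<^sub>k \<subseteq> r(J\<^sup>k)\<close>; so the Loewy length is \<open>d\<close>, the radical filtration \<open>J\<^bsup>d-k\<^esup>\<close> and
  the socle filtration \<open>r(J\<^sup>k)\<close> are Loewy filtrations, and \<open>\<^sub>RR\<close> is rigid iff \<open>r(J\<^sup>k) = J\<^bsup>d-k\<^esup>\<close>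
  for all \<open>k\<close>. Symmetrically \<open>R\<^sub>R\<close> is rigid iff \<open>l(J\<^sup>k) = J\<^bsup>d-k\<^esup>\<close>; here one also needs \<open>R/J\<close> to
  be semisimple on the right, which follows from left semisimplicity via idempotents modulo \<open>J\<close>.
  The dual Jacobson system agrees with that of \<open>R\<^sup>o\<^sup>p\<close> iff these annihilator identities hold:
  the entries with \<open>i = 1\<close> or \<open>j = d + 1\<close> are exactly the identities, and they imply the rest.\<close>

section \<open>Ideals with respect to an abstract multiplication\<close>

text \<open>Left and right ideals are handled by one argument, parametrised by a multiplication \<open>mul\<close>
  that is either \<open>(*)\<close> or its flip.\<close>
definition left_ideal_wrt :: "('a::ring_1 \<Rightarrow> 'a \<Rightarrow> 'a) \<Rightarrow> 'a set \<Rightarrow> bool" where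
  "left_ideal_wrt mul I \<longleftrightarrow> 0 \<in> I \<and> (\<forall>x\<in>I. \<forall>y\<in>I. x + y \<in> I) \<and> (\<forall>x\<in>I. - x \<in> I)
     \<and> (\<forall>r. \<forall>x\<in>I. mul r x \<in> I)"

lemma left_ideal_wrt_times: "left_ideal_wrt (*) = left_ideal"
  by (simp add: fun_eq_iff left_ideal_def left_ideal_wrt_def)

lemma left_ideal_wrt_flip: "left_ideal_wrt (\<lambda>a b. b * a) = right_ideal"
  by (simp add: fun_eq_iff right_ideal_def left_ideal_wrt_def)

locale mult_ring =
  fixes mul :: "'a::ring_1 \<Rightarrow> 'a \<Rightarrow> 'a"
  assumes mul_assoc: "mul (mul a b) c = mul a (mul b c)"
    and mul_distrib_left: "mul a (b + c) = mul a b + mul a c"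
    and mul_distrib_right: "mul (a + b) c = mul a c + mul b c"
    and mul_one_left: "mul 1 a = a"
begin

lemma mul_zero_left: "mul 0 a = 0"
  using mul_distrib_right[of 0 0 a] by simp

lemma mul_zero_right: "mul a 0 = 0"
  using mul_distrib_left[of a 0 0] by simp

lemma mul_minus_left: "mul (- a) b = - mul a b"
  using mul_distrib_right[of a "- a" b] by (simp add: mul_zero_left add.inverse_unique)

lemma mul_minus_right: "mul a (- b) = - mul a b"
  using mul_distrib_left[of a b "- b"] by (simp add: mul_zero_right add.inverse_unique)

lemma mul_diff_left: "mul (a - b) c = mul a c - mul b c"
  using mul_distrib_right[of a "- b" c] by (simp add: mul_minus_left)

lemma idealI:
  "0 \<in> I \<Longrightarrow> (\<And>x y. x \<in> I \<Longrightarrow> y \<in> I \<Longrightarrow> x + y \<in> I) \<Longrightarrow> (\<And>x. x \<in> I \<Longrightarrow> - x \<in> I)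
    \<Longrightarrow> (\<And>r x. x \<in> I \<Longrightarrow> mul r x \<in> I) \<Longrightarrow> left_ideal_wrt mul I"
  unfolding left_ideal_wrt_def by blast

lemma ideal_zero: "left_ideal_wrt mul I \<Longrightarrow> 0 \<in> I"
  and ideal_add: "left_ideal_wrt mul I \<Longrightarrow> x \<in> I \<Longrightarrow> y \<in> I \<Longrightarrow> x + y \<in> I"
  and ideal_uminus: "left_ideal_wrt mul I \<Longrightarrow> x \<in> I \<Longrightarrow> - x \<in> I"
  and ideal_mul: "left_ideal_wrt mul I \<Longrightarrow> x \<in> I \<Longrightarrow> mul r x \<in> I"
  unfolding left_ideal_wrt_def by blast+

lemma ideal_diff: "left_ideal_wrt mul I \<Longrightarrow> x \<in> I \<Longrightarrow> y \<in> I \<Longrightarrow> x - y \<in> I"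
  by (metis diff_conv_add_uminus ideal_add ideal_uminus)

lemma ideal_UNIV: "left_ideal_wrt mul UNIV"
  by (rule idealI) auto

lemma ideal_Int: "left_ideal_wrt mul I \<Longrightarrow> left_ideal_wrt mul K \<Longrightarrow> left_ideal_wrt mul (I \<inter> K)"
  unfolding left_ideal_wrt_def by blast

lemma ideal_sum:
  assumes C: "left_ideal_wrt mul C" and D: "left_ideal_wrt mul D"
  shows "left_ideal_wrt mul (ideal_sum C D)"
proof (rule idealI)
  show "0 \<in> ideal_sum C D"
    unfolding ideal_sum_def using ideal_zero[OF C] ideal_zero[OF D] by force
next
  fix x y assume "x \<in> ideal_sum C D" "y \<in> ideal_sum C D"
  then obtain a b a' b' where "x = a + b" "y = a' + b'" "a \<in> C" "b \<in> D" "a' \<in> C" "b' \<in> D"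
    unfolding ideal_sum_def by blast
  then show "x + y \<in> ideal_sum C D"
    unfolding ideal_sum_def using ideal_add[OF C] ideal_add[OF D]
    by (intro CollectI exI[of _ "a + a'"] exI[of _ "b + b'"]) (simp add: algebra_simps)
next
  fix x r assume "x \<in> ideal_sum C D"
  then obtain a b where "x = a + b" "a \<in> C" "b \<in> D"
    unfolding ideal_sum_def by blast
  then show "- x \<in> ideal_sum C D"
    unfolding ideal_sum_def using C D
    by (intro CollectI exI[of _ "- a"] exI[of _ "- b"]) (simp add: ideal_uminus)
  show "mul r x \<in> ideal_sum C D"
    unfolding ideal_sum_def using \<open>x = a + b\<close> \<open>a \<in> C\<close> \<open>b \<in> D\<close> C D
    by (intro CollectI exI[of _ "mul r a"] exI[of _ "mul r b"]) (simp add: ideal_mul mul_distrib_left)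
qed

lemma ideal_sum_subset_left: "left_ideal_wrt mul D \<Longrightarrow> C \<subseteq> ideal_sum C D"
  and ideal_sum_subset_right: "left_ideal_wrt mul C \<Longrightarrow> D \<subseteq> ideal_sum C D"
  unfolding ideal_sum_def by (force dest: ideal_zero)+

lemma ideal_colon: "left_ideal_wrt mul I \<Longrightarrow> left_ideal_wrt mul {r. mul r m \<in> I}"
  by (rule idealI) (simp_all add: ideal_zero ideal_add ideal_uminus ideal_mul
      mul_zero_left mul_distrib_right mul_minus_left mul_assoc)

lemma ideal_add_multiples:
  assumes I: "left_ideal_wrt mul I" and L: "left_ideal_wrt mul L"
  shows "left_ideal_wrt mul {a + mul l m | a l. a \<in> I \<and> l \<in> L}"
proof (rule idealI)
  show "0 \<in> {a + mul l m | a l. a \<in> I \<and> l \<in> L}"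
    using ideal_zero[OF I] ideal_zero[OF L] by (force simp: mul_zero_left)
next
  fix x y assume "x \<in> {a + mul l m | a l. a \<in> I \<and> l \<in> L}" "y \<in> {a + mul l m | a l. a \<in> I \<and> l \<in> L}"
  then obtain a l a' l' where "x = a + mul l m" "y = a' + mul l' m" "a \<in> I" "l \<in> L" "a' \<in> I" "l' \<in> L"
    by blast
  then show "x + y \<in> {a + mul l m | a l. a \<in> I \<and> l \<in> L}"
    using ideal_add[OF I] ideal_add[OF L]
    by (intro CollectI exI[of _ "a + a'"] exI[of _ "l + l'"]) (simp add: algebra_simps mul_distrib_right)
next
  fix x r assume "x \<in> {a + mul l m | a l. a \<in> I \<and> l \<in> L}"
  then obtain a l where al: "x = a + mul l m" "a \<in> I" "l \<in> L"
    by blast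
  then show "- x \<in> {a + mul l m | a l. a \<in> I \<and> l \<in> L}"
    using I L by (intro CollectI exI[of _ "- a"] exI[of _ "- l"]) (simp add: ideal_uminus mul_minus_left)
  show "mul r x \<in> {a + mul l m | a l. a \<in> I \<and> l \<in> L}"
    using al I L by (intro CollectI exI[of _ "mul r a"] exI[of _ "mul r l"])
      (simp add: ideal_mul mul_distrib_left mul_assoc)
qed

lemma subset_add_multiples: "left_ideal_wrt mul L \<Longrightarrow> I \<subseteq> {a + mul l m | a l. a \<in> I \<and> l \<in> L}"
  by (force dest: ideal_zero intro: exI[of _ 0] simp: mul_zero_left)

lemma ideal_chain_Union:
  assumes "Ch \<noteq> {}" and "\<And>X. X \<in> Ch \<Longrightarrow> left_ideal_wrt mul X"
    and "\<And>X Y. X \<in> Ch \<Longrightarrow> Y \<in> Ch \<Longrightarrow> X \<subseteq> Y \<or> Y \<subseteq> X"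
  shows "left_ideal_wrt mul (\<Union>Ch)"
proof (rule idealI)
  show "0 \<in> \<Union>Ch"
    using assms(1,2) ideal_zero by blast
next
  fix x y assume "x \<in> \<Union>Ch" "y \<in> \<Union>Ch"
  then obtain X Y where "x \<in> X" "y \<in> Y" "X \<in> Ch" "Y \<in> Ch"
    by blast
  with assms(2) assms(3)[of X Y] show "x + y \<in> \<Union>Ch"
    by (meson UnionI ideal_add subsetD)
next
  fix x r assume "x \<in> \<Union>Ch"
  then show "- x \<in> \<Union>Ch" "mul r x \<in> \<Union>Ch"
    using assms(2) ideal_uminus ideal_mul by blast+
qed

end

interpretation left: mult_ring "(*) :: 'a::ring_1 \<Rightarrow> 'a \<Rightarrow> 'a"
  rewrites "left_ideal_wrt (*) = (left_ideal :: 'a set \<Rightarrow> bool)"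
  by unfold_locales (simp_all add: algebra_simps left_ideal_wrt_times)

interpretation right: mult_ring "\<lambda>a b :: 'a::ring_1. b * a"
  rewrites "left_ideal_wrt (\<lambda>a b. b * a) = (right_ideal :: 'a set \<Rightarrow> bool)"
  by unfold_locales (simp_all add: algebra_simps left_ideal_wrt_flip)

section \<open>Semisimple quotients and Loewy filtrations\<close>

locale radical_ring = mult_ring +
  fixes J :: "'a::ring_1 set"
  assumes radical_ideal: "left_ideal_wrt mul J"
    and radical_unit: "j \<in> J \<Longrightarrow> \<exists>u. mul u (1 - j) = 1"
    and semisimple_top: "semisimple_quot (left_ideal_wrt mul) J UNIV"
begin

lemma radical_annihilates_semisimple_quot:
  assumes A: "left_ideal_wrt mul A" and B: "left_ideal_wrt mul B" and "A \<subseteq> B"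
    and S: "semisimple_quot (left_ideal_wrt mul) A B" and j: "j \<in> J" and b: "b \<in> B"
  shows "mul j b \<in> A"
proof -
  define C where "C = {a + mul i b | a i. a \<in> A \<and> i \<in> J}"
  have C: "left_ideal_wrt mul C"
    unfolding C_def using A radical_ideal by (rule ideal_add_multiples)
  have "A \<subseteq> C"
    unfolding C_def using radical_ideal by (rule subset_add_multiples)
  moreover have "C \<subseteq> B"
    unfolding C_def using \<open>A \<subseteq> B\<close> ideal_add[OF B] ideal_mul[OF B b] by blast
  ultimately obtain D where D: "left_ideal_wrt mul D" "A \<subseteq> D" "C \<inter> D = A" "ideal_sum C D = B"
    using S C unfolding semisimple_quot_def by blast
  from b obtain c e where ce: "b = c + e" "c \<in> C" "e \<in> D"
    unfolding D(4)[symmetric] ideal_sum_def by blast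
  then obtain a i where "c = a + mul i b" "a \<in> A" "i \<in> J"
    unfolding C_def by blast
  with ce have e: "b = a + mul i b + e" "a \<in> A" "i \<in> J" "e \<in> D"
    by simp_all
  have "mul (1 - i) b = b - mul i b"
    by (simp add: mul_diff_left mul_one_left)
  also have "\<dots> = a + e"
    using arg_cong[OF e(1), of "\<lambda>x. x - mul i b"] by (simp add: algebra_simps)
  finally have "mul (1 - i) b = a + e" .
  then have "mul (1 - i) b \<in> D"
    using D(1,2) e(2,4) ideal_add by (metis subsetD)
  moreover obtain u where "mul u (1 - i) = 1"
    using radical_unit[OF e(3)] by blast
  ultimately have "b \<in> D"
    using ideal_mul[OF D(1), of "mul (1 - i) b" u] by (simp add: mul_assoc[symmetric] mul_one_left)
  moreover have "mul j b \<in> C"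
    unfolding C_def using ideal_zero[OF A] j by force
  ultimately show ?thesis
    using D(1,3) ideal_mul by blast
qed

lemma exists_maximal_complement:
  assumes "left_ideal_wrt mul A" "A \<subseteq> C" "A \<subseteq> B"
  obtains D where "left_ideal_wrt mul D" "A \<subseteq> D" "D \<subseteq> B" "C \<inter> D = A"
    and "\<And>X. left_ideal_wrt mul X \<Longrightarrow> D \<subseteq> X \<Longrightarrow> X \<subseteq> B \<Longrightarrow> C \<inter> X = A \<Longrightarrow> X = D"
proof -
  define Fam where "Fam = {D. left_ideal_wrt mul D \<and> A \<subseteq> D \<and> D \<subseteq> B \<and> C \<inter> D = A}"
  have "\<exists>M\<in>Fam. \<forall>X\<in>Fam. M \<subseteq> X \<longrightarrow> X = M"
  proof (rule subset_Zorn)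
    fix Ch assume "subset.chain Fam Ch"
    then have Ch: "Ch \<subseteq> Fam" "\<And>X Y. X \<in> Ch \<Longrightarrow> Y \<in> Ch \<Longrightarrow> X \<subseteq> Y \<or> Y \<subseteq> X"
      unfolding subset.chain_def by auto
    show "\<exists>U\<in>Fam. \<forall>X\<in>Ch. X \<subseteq> U"
    proof (cases "Ch = {}")
      case True
      then show ?thesis
        using assms unfolding Fam_def by blast
    next
      case False
      have "left_ideal_wrt mul (\<Union>Ch)"
        using False Ch by (intro ideal_chain_Union) (auto simp: Fam_def)
      then have "\<Union>Ch \<in> Fam"
        using False Ch(1) unfolding Fam_def by blast
      then show ?thesis
        by blast
    qed
  qed
  then obtain D where "D \<in> Fam" "\<And>X. X \<in> Fam \<Longrightarrow> D \<subseteq> X \<Longrightarrow> X = D"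
    by blast
  then show ?thesis
    using that[of D] unfolding Fam_def by blast
qed

lemma Int_add_multiples_subset:
  assumes D: "left_ideal_wrt mul D" "A \<subseteq> D" "C \<inter> D = A"
    and ann: "\<And>j. j \<in> J \<Longrightarrow> mul j m \<in> A"
    and L': "\<And>k. k \<in> L' \<Longrightarrow> mul k m \<in> ideal_sum C D \<Longrightarrow> k \<in> J"
  shows "C \<inter> {e + mul k m | e k. e \<in> D \<and> k \<in> L'} \<subseteq> A"
proof
  fix z assume z: "z \<in> C \<inter> {e + mul k m | e k. e \<in> D \<and> k \<in> L'}"
  then obtain e k where ek: "z = e + mul k m" "e \<in> D" "k \<in> L'"
    by blast
  have "mul k m = z + - e"
    using ek(1) by simp
  also have "\<dots> \<in> ideal_sum C D"
    using z ek(2) D(1) ideal_uminus unfolding ideal_sum_def by blast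
  finally have "mul k m \<in> D"
    using L' ek(3) ann D(2) by blast
  then have "z \<in> D"
    using ek(1,2) D(1) ideal_add by blast
  then show "z \<in> A"
    using z D(3) by blast
qed

text \<open>If \<open>m \<notin> C + D\<close>, a complement \<open>L'\<close> over \<open>J\<close> of \<open>{r. r m \<in> C + D}\<close> would let \<open>D\<close>
  grow to \<open>D + L' m\<close>, contradicting maximality.\<close>
lemma maximal_complement_spans:
  assumes B: "left_ideal_wrt mul B" and C: "left_ideal_wrt mul C" and "A \<subseteq> C" "C \<subseteq> B"
    and ann: "\<And>j b. j \<in> J \<Longrightarrow> b \<in> B \<Longrightarrow> mul j b \<in> A"
    and D: "left_ideal_wrt mul D" "A \<subseteq> D" "D \<subseteq> B" "C \<inter> D = A"
    and D_max: "\<And>X. left_ideal_wrt mul X \<Longrightarrow> D \<subseteq> X \<Longrightarrow> X \<subseteq> B \<Longrightarrow> C \<inter> X = A \<Longrightarrow> X = D"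
    and m: "m \<in> B"
  shows "m \<in> ideal_sum C D"
proof -
  define L where "L = {r. mul r m \<in> ideal_sum C D}"
  have CD: "left_ideal_wrt mul (ideal_sum C D)"
    using C D(1) by (rule ideal_sum)
  have "left_ideal_wrt mul L"
    unfolding L_def using CD by (rule ideal_colon)
  moreover have "J \<subseteq> L"
    unfolding L_def using ann[OF _ m] \<open>A \<subseteq> C\<close> ideal_sum_subset_left[OF D(1)] by blast
  ultimately obtain L' where L': "left_ideal_wrt mul L'" "L \<inter> L' = J" "ideal_sum L L' = UNIV"
    using semisimple_top unfolding semisimple_quot_def by blast
  define D' where "D' = {e + mul k m | e k. e \<in> D \<and> k \<in> L'}"
  have D'_ideal: "left_ideal_wrt mul D'"
    unfolding D'_def using D(1) L'(1) by (rule ideal_add_multiples)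
  have "D \<subseteq> D'"
    unfolding D'_def using L'(1) by (rule subset_add_multiples)
  moreover have "D' \<subseteq> B"
    unfolding D'_def using D(3) ideal_add[OF B] ideal_mul[OF B m] by blast
  moreover have "C \<inter> D' \<subseteq> A"
    unfolding D'_def using D(1,2,4) ann[OF _ m] L'(2) unfolding L_def
    by (intro Int_add_multiples_subset) auto
  ultimately have "D' = D"
    using D_max[OF D'_ideal] D(2) \<open>A \<subseteq> C\<close> by blast
  have "1 \<in> ideal_sum L L'"
    by (simp add: L'(3))
  then obtain l l' where l: "1 = l + l'" "l \<in> L" "l' \<in> L'"
    unfolding ideal_sum_def by blast
  have "mul l' m \<in> D'"
    unfolding D'_def using ideal_zero[OF D(1)] l(3) by force
  then have "mul l' m \<in> ideal_sum C D"
    using \<open>D' = D\<close> ideal_sum_subset_right[OF C] by blast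
  moreover have "mul l m \<in> ideal_sum C D"
    using l(2) unfolding L_def by blast
  moreover have "m = mul l m + mul l' m"
    using l(1) mul_distrib_right mul_one_left by metis
  ultimately show ?thesis
    using ideal_add[OF CD] by metis
qed

lemma semisimple_quot_if_annihilated:
  assumes A: "left_ideal_wrt mul A" and B: "left_ideal_wrt mul B" and "A \<subseteq> B"
    and ann: "\<And>j b. j \<in> J \<Longrightarrow> b \<in> B \<Longrightarrow> mul j b \<in> A"
  shows "semisimple_quot (left_ideal_wrt mul) A B"
  unfolding semisimple_quot_def
proof (intro allI impI)
  fix C assume C: "left_ideal_wrt mul C \<and> A \<subseteq> C \<and> C \<subseteq> B"
  then obtain D where D: "left_ideal_wrt mul D" "A \<subseteq> D" "D \<subseteq> B" "C \<inter> D = A"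
    and D_max: "\<And>X. left_ideal_wrt mul X \<Longrightarrow> D \<subseteq> X \<Longrightarrow> X \<subseteq> B \<Longrightarrow> C \<inter> X = A \<Longrightarrow> X = D"
    using exists_maximal_complement[OF A, of C B] \<open>A \<subseteq> B\<close> by blast
  have "B \<subseteq> ideal_sum C D"
    using maximal_complement_spans[OF B _ _ _ ann D D_max] C by blast
  moreover have "ideal_sum C D \<subseteq> B"
    using C D(3) ideal_add[OF B] unfolding ideal_sum_def by blast
  ultimately show "\<exists>D. left_ideal_wrt mul D \<and> A \<subseteq> D \<and> D \<subseteq> B \<and> C \<inter> D = A \<and> ideal_sum C D = B"
    using D by blast
qed

end

text \<open>\<open>P k\<close> stands for \<open>J\<^sup>k\<close>, described by properties that are invariant under passing to the
  opposite ring: it is generated both by \<open>J P\<^sub>k\<close> and by \<open>P\<^sub>k J\<close>.\<close>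
locale radical_layers = radical_ring +
  fixes P :: "nat \<Rightarrow> 'a::ring_1 set" and d :: nat
  assumes layer_0: "P 0 = UNIV"
    and layer_nilpotent: "P d = {0}"
    and layer_nilpotent_least: "P n = {0} \<Longrightarrow> d \<le> n"
    and layer_ideal: "left_ideal_wrt mul (P k)"
    and layer_mul_right: "x \<in> P k \<Longrightarrow> mul x r \<in> P k"
    and radical_mul_layer: "j \<in> J \<Longrightarrow> w \<in> P k \<Longrightarrow> mul j w \<in> P (Suc k)"
    and layer_mul_radical: "w \<in> P k \<Longrightarrow> j \<in> J \<Longrightarrow> mul w j \<in> P (Suc k)"
    and layer_Suc_induct_left: "z \<in> P (Suc k) \<Longrightarrow> 0 \<in> Q \<Longrightarrow> (\<And>a b. a \<in> Q \<Longrightarrow> b \<in> Q \<Longrightarrow> a + b \<in> Q)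
      \<Longrightarrow> (\<And>j w. j \<in> J \<Longrightarrow> w \<in> P k \<Longrightarrow> mul j w \<in> Q) \<Longrightarrow> z \<in> Q"
    and layer_Suc_induct_right: "z \<in> P (Suc k) \<Longrightarrow> 0 \<in> Q \<Longrightarrow> (\<And>a b. a \<in> Q \<Longrightarrow> b \<in> Q \<Longrightarrow> a + b \<in> Q)
      \<Longrightarrow> (\<And>j w. j \<in> J \<Longrightarrow> w \<in> P k \<Longrightarrow> mul w j \<in> Q) \<Longrightarrow> z \<in> Q"
begin

lemma layer_Suc_subset: "P (Suc k) \<subseteq> P k"
proof
  fix z assume "z \<in> P (Suc k)"
  then show "z \<in> P k"
    by (rule layer_Suc_induct_left) (simp_all add: ideal_zero ideal_add ideal_mul layer_ideal)
qed

definition socle :: "nat \<Rightarrow> 'a set" where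
  "socle k = {y. \<forall>z\<in>P k. mul z y = 0}"

lemma socle_ideal: "left_ideal_wrt mul (socle k)"
  unfolding socle_def
  by (rule idealI) (simp_all add: mul_zero_right mul_distrib_left mul_minus_right
      layer_mul_right flip: mul_assoc)

lemma socle_0: "socle 0 = {0}"
proof -
  have "y = 0" if "y \<in> socle 0" for y
    using that mul_one_left[of y] by (simp add: socle_def layer_0)
  then show ?thesis
    using ideal_zero[OF socle_ideal] by blast
qed

lemma socle_nilpotent: "socle d = UNIV"
  by (simp add: socle_def layer_nilpotent mul_zero_left)

lemma socle_subset_Suc: "socle k \<subseteq> socle (Suc k)"
  unfolding socle_def using layer_Suc_subset by blast

lemma radical_mul_socle_Suc:
  assumes "y \<in> socle (Suc k)" and "j \<in> J"
  shows "mul j y \<in> socle k"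
  using assms layer_mul_radical by (simp add: socle_def flip: mul_assoc)

lemma radical_filtration: "ss_filtration (left_ideal_wrt mul) d (\<lambda>i. P (d - i))"
  unfolding ss_filtration_def
proof (intro conjI allI impI)
  fix i assume "i < d"
  then have eq: "d - i = Suc (d - Suc i)"
    by simp
  show "P (d - i) \<subseteq> P (d - Suc i)"
    unfolding eq by (rule layer_Suc_subset)
  then show "semisimple_quot (left_ideal_wrt mul) (P (d - i)) (P (d - Suc i))"
    by (rule semisimple_quot_if_annihilated[OF layer_ideal layer_ideal])
      (simp add: eq radical_mul_layer)
qed (simp_all add: layer_0 layer_nilpotent layer_ideal)

lemma socle_filtration: "ss_filtration (left_ideal_wrt mul) d socle"
  unfolding ss_filtration_def
  by (simp add: socle_0 socle_nilpotent socle_ideal socle_subset_Suc radical_mul_socle_Suc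
      semisimple_quot_if_annihilated)

lemma layer_subset_filtration:
  assumes F: "ss_filtration (left_ideal_wrt mul) n F" and "k \<le> n"
  shows "P k \<subseteq> F (n - k)"
  using \<open>k \<le> n\<close>
proof (induction k)
  case 0
  then show ?case
    using F by (simp add: ss_filtration_def)
next
  case (Suc k)
  define i where "i = n - Suc k"
  have i: "i < n" "Suc i = n - k"
    using Suc.prems unfolding i_def by auto
  have Fi: "left_ideal_wrt mul (F i)" "left_ideal_wrt mul (F (Suc i))" "F i \<subseteq> F (Suc i)"
    "semisimple_quot (left_ideal_wrt mul) (F i) (F (Suc i))"
    using F \<open>i < n\<close> unfolding ss_filtration_def by auto
  have "P k \<subseteq> F (Suc i)"
    using Suc i by simp
  then have annihilated: "\<And>j w. j \<in> J \<Longrightarrow> w \<in> P k \<Longrightarrow> mul j w \<in> F i"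
    using radical_annihilates_semisimple_quot[OF Fi] by blast
  show ?case
    unfolding i_def[symmetric]
  proof
    fix z assume "z \<in> P (Suc k)"
    then show "z \<in> F i"
      by (rule layer_Suc_induct_left) (simp_all add: ideal_zero[OF Fi(1)] ideal_add[OF Fi(1)] annihilated)
  qed
qed

lemma filtration_subset_socle:
  assumes F: "ss_filtration (left_ideal_wrt mul) n F" and "k \<le> n"
  shows "F k \<subseteq> socle k"
  using \<open>k \<le> n\<close>
proof (induction k)
  case 0
  then show ?case
    using F socle_ideal ideal_zero by (simp add: ss_filtration_def)
next
  case (Suc k)
  have Fk: "left_ideal_wrt mul (F k)" "left_ideal_wrt mul (F (Suc k))" "F k \<subseteq> F (Suc k)"
    "semisimple_quot (left_ideal_wrt mul) (F k) (F (Suc k))"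
    using F Suc.prems unfolding ss_filtration_def by auto
  have IH: "F k \<subseteq> socle k"
    using Suc by simp
  show ?case
  proof
    fix y assume y: "y \<in> F (Suc k)"
    have "z \<in> {z. mul z y = 0}" if "z \<in> P (Suc k)" for z
    proof (rule layer_Suc_induct_right[OF that])
      fix j w assume "j \<in> J" "w \<in> P k"
      moreover have "mul j y \<in> socle k"
        using radical_annihilates_semisimple_quot[OF Fk \<open>j \<in> J\<close> y] IH by blast
      ultimately show "mul w j \<in> {z. mul z y = 0}"
        by (simp add: socle_def mul_assoc)
    qed (simp_all add: mul_zero_left mul_distrib_right)
    then show "y \<in> socle (Suc k)"
      by (simp add: socle_def)
  qed
qed

lemma module_loewy_length_eq: "module_loewy_length (left_ideal_wrt mul) = d"
  unfolding module_loewy_length_def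
proof (rule Least_equality)
  show "\<exists>F. ss_filtration (left_ideal_wrt mul) d F"
    using radical_filtration by blast
next
  fix n assume "\<exists>F. ss_filtration (left_ideal_wrt mul) n F"
  then obtain F where F: "ss_filtration (left_ideal_wrt mul) n F"
    by blast
  then have "P n \<subseteq> {0}"
    using layer_subset_filtration[OF F, of n] by (simp add: ss_filtration_def)
  then show "d \<le> n"
    using ideal_zero[OF layer_ideal] layer_nilpotent_least by blast
qed

text \<open>Every Loewy filtration is squeezed between the radical and the socle filtration.\<close>
theorem rigid_module_iff: "rigid_module (left_ideal_wrt mul) \<longleftrightarrow> (\<forall>k\<le>d. socle k = P (d - k))"
proof
  assume "rigid_module (left_ideal_wrt mul)"
  moreover have "loewy_filtration (left_ideal_wrt mul) (\<lambda>i. P (d - i))"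
    "loewy_filtration (left_ideal_wrt mul) socle"
    unfolding loewy_filtration_def module_loewy_length_eq
    using radical_filtration socle_filtration by blast+
  ultimately show "\<forall>k\<le>d. socle k = P (d - k)"
    unfolding rigid_module_def module_loewy_length_eq by metis
next
  assume eq: "\<forall>k\<le>d. socle k = P (d - k)"
  have "F i = P (d - i)" if "loewy_filtration (left_ideal_wrt mul) F" "i \<le> d" for F i
  proof -
    have F: "ss_filtration (left_ideal_wrt mul) d F"
      using that(1) unfolding loewy_filtration_def module_loewy_length_eq by blast
    show ?thesis
      using layer_subset_filtration[OF F, of "d - i"] filtration_subset_socle[OF F that(2)] eq that(2)
      by auto
  qed
  moreover have "loewy_filtration (left_ideal_wrt mul) (\<lambda>i. P (d - i))"
    unfolding loewy_filtration_def module_loewy_length_eq using radical_filtration by blast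
  ultimately show "rigid_module (left_ideal_wrt mul)"
    unfolding rigid_module_def module_loewy_length_eq by metis
qed

end

section \<open>Products and powers of ideals\<close>

lemma ideal_prod_mem: "a \<in> A \<Longrightarrow> b \<in> B \<Longrightarrow> a * b \<in> ideal_prod A B"
  unfolding ideal_prod_def by (intro CollectI exI[of _ "Suc 0"] exI[of _ "\<lambda>_. a"] exI[of _ "\<lambda>_. b"]) simp

lemma ideal_prod_zero: "0 \<in> ideal_prod A B"
  unfolding ideal_prod_def by (intro CollectI exI[of _ 0]) simp

lemma ideal_prod_add_mem:
  assumes "x \<in> ideal_prod A B" "a \<in> A" "b \<in> B"
  shows "x + a * b \<in> ideal_prod A B"
proof -
  obtain n :: nat and f g where x: "x = (\<Sum>i<n. f i * g i)" "\<forall>i<n. f i \<in> A \<and> g i \<in> B"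
    using assms(1) unfolding ideal_prod_def by blast
  have "x + a * b = (\<Sum>i<Suc n. (f(n := a)) i * (g(n := b)) i)"
    using x(1) by (simp add: sum.lessThan_Suc)
  moreover have "\<forall>i<Suc n. (f(n := a)) i \<in> A \<and> (g(n := b)) i \<in> B"
    using x(2) assms by (simp add: less_Suc_eq)
  ultimately show ?thesis
    unfolding ideal_prod_def by blast
qed

lemma ideal_prod_induct[consumes 1, case_names zero add mult]:
  assumes "z \<in> ideal_prod A B" and "0 \<in> Q" and "\<And>x y. x \<in> Q \<Longrightarrow> y \<in> Q \<Longrightarrow> x + y \<in> Q"
    and "\<And>a b. a \<in> A \<Longrightarrow> b \<in> B \<Longrightarrow> a * b \<in> Q"
  shows "z \<in> Q"
proof -
  obtain n :: nat and f g where "z = (\<Sum>i<n. f i * g i)" "\<forall>i<n. f i \<in> A \<and> g i \<in> B"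
    using assms(1) unfolding ideal_prod_def by blast
  moreover have "\<forall>i<n. f i \<in> A \<and> g i \<in> B \<Longrightarrow> (\<Sum>i<n. f i * g i) \<in> Q"
    by (induction n) (simp_all add: assms(2-4))
  ultimately show ?thesis
    by simp
qed

lemma ideal_prod_add:
  assumes "x \<in> ideal_prod A B" "y \<in> ideal_prod A B"
  shows "x + y \<in> ideal_prod A B"
proof -
  have "y \<in> {y. \<forall>x\<in>ideal_prod A B. x + y \<in> ideal_prod A B}"
    using assms(2)
  proof (induction rule: ideal_prod_induct)
    case (add y y')
    then show ?case
      by (simp add: add.assoc[symmetric])
  qed (simp_all add: ideal_prod_add_mem)
  then show ?thesis
    using assms(1) by blast
qed

lemma ideal_prod_uminus:
  assumes "x \<in> ideal_prod A B" and "\<And>b. b \<in> B \<Longrightarrow> - b \<in> B"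
  shows "- x \<in> ideal_prod A B"
proof -
  have "x \<in> {x. - x \<in> ideal_prod A B}"
    using assms(1)
  proof (induction rule: ideal_prod_induct)
    case (mult a b)
    then show ?case
      using ideal_prod_mem[OF _ assms(2)] by simp
  next
    case (add x y)
    then show ?case
      using ideal_prod_add[of "- x" A B "- y"] by simp
  qed (simp add: ideal_prod_zero)
  then show ?thesis
    by simp
qed

lemma ideal_prod_mul_left:
  assumes "x \<in> ideal_prod A B" and "\<And>a. a \<in> A \<Longrightarrow> r * a \<in> A"
  shows "r * x \<in> ideal_prod A B"
proof -
  have "x \<in> {x. r * x \<in> ideal_prod A B}"
    using assms(1)
  proof (induction rule: ideal_prod_induct)
    case (mult a b)
    then show ?case
      using ideal_prod_mem[OF assms(2)] by (simp add: mult.assoc[symmetric])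
  qed (simp_all add: ideal_prod_zero ideal_prod_add distrib_left)
  then show ?thesis
    by simp
qed

lemma ideal_prod_mul_right:
  assumes "x \<in> ideal_prod A B" and "\<And>b. b \<in> B \<Longrightarrow> b * r \<in> B"
  shows "x * r \<in> ideal_prod A B"
proof -
  have "x \<in> {x. x * r \<in> ideal_prod A B}"
    using assms(1)
  proof (induction rule: ideal_prod_induct)
    case (mult a b)
    then show ?case
      using ideal_prod_mem[OF _ assms(2)] by (simp add: mult.assoc)
  qed (simp_all add: ideal_prod_zero ideal_prod_add distrib_right)
  then show ?thesis
    by simp
qed

section \<open>The Jacobson radical of a semiprimary ring\<close>

lemma jacobson_left_ideal: "left_ideal (jacobson :: 'a::ring_1 set)"
  unfolding jacobson_def maximal_left_ideal_def
  by (rule left.idealI) (auto simp: left.ideal_zero left.ideal_add left.ideal_uminus left.ideal_mul)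

lemma maximal_left_ideal_colon:
  assumes M: "maximal_left_ideal M" and "r \<notin> M"
  shows "maximal_left_ideal {x. x * r \<in> M}"
proof -
  let ?Q = "{x. x * r \<in> M}"
  have M_ideal: "left_ideal M"
    using M by (simp add: maximal_left_ideal_def)
  have Q: "left_ideal ?Q"
    using M_ideal by (rule left.ideal_colon)
  moreover have "1 \<notin> ?Q"
    using \<open>r \<notin> M\<close> by simp
  moreover have "N = ?Q" if N: "left_ideal N" "?Q \<subseteq> N" "N \<noteq> UNIV" for N
  proof (rule ccontr)
    assume "N \<noteq> ?Q"
    then obtain x where x: "x \<in> N" "x * r \<notin> M"
      using N(2) by blast
    define M' where "M' = {m + t * (x * r) | m t. m \<in> M \<and> t \<in> UNIV}"
    have "left_ideal M'"
      unfolding M'_def using M_ideal left.ideal_UNIV by (rule left.ideal_add_multiples)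
    moreover have "M \<subseteq> M'"
      unfolding M'_def using left.ideal_UNIV by (rule left.subset_add_multiples)
    moreover have "x * r \<in> M'"
      unfolding M'_def using left.ideal_zero[OF M_ideal]
      by (intro CollectI exI[of _ 0] exI[of _ 1]) simp
    ultimately have "M' = UNIV"
      using M x(2) unfolding maximal_left_ideal_def by blast
    have "y \<in> N" for y
    proof -
      obtain m t where "y * r = m + t * (x * r)" "m \<in> M"
        using \<open>M' = UNIV\<close> unfolding M'_def by blast
      then have "(y - t * x) * r \<in> M"
        by (simp add: algebra_simps)
      then have "y - t * x \<in> N"
        using N(2) by blast
      then have "(y - t * x) + t * x \<in> N"
        using left.ideal_add[OF N(1)] left.ideal_mul[OF N(1) x(1)] by blast
      then show "y \<in> N"
        by simp
    qed
    with N(3) show False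
      by blast
  qed
  ultimately show ?thesis
    unfolding maximal_left_ideal_def by blast
qed

lemma jacobson_mul_right:
  assumes "j \<in> (jacobson :: 'a::ring_1 set)"
  shows "j * r \<in> jacobson"
  unfolding jacobson_def
proof
  fix M :: "'a set" assume "M \<in> {M. maximal_left_ideal M}"
  then have M: "maximal_left_ideal M" and M_ideal: "left_ideal M"
    by (simp_all add: maximal_left_ideal_def)
  show "j * r \<in> M"
  proof (cases "r \<in> M")
    case True
    then show ?thesis
      using left.ideal_mul[OF M_ideal] by blast
  next
    case False
    then have "j \<in> {x. x * r \<in> M}"
      using assms maximal_left_ideal_colon[OF M] unfolding jacobson_def by blast
    then show ?thesis
      by simp
  qed
qed

lemma jacobson_right_ideal: "right_ideal (jacobson :: 'a::ring_1 set)"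
  by (intro right.idealI) (simp_all add: left.ideal_zero[OF jacobson_left_ideal]
      left.ideal_add[OF jacobson_left_ideal] left.ideal_uminus[OF jacobson_left_ideal] jacobson_mul_right)

lemma ideal_pow_left_ideal:
  assumes "left_ideal A"
  shows "left_ideal (ideal_pow A k)"
proof (induction k)
  case (Suc k)
  show ?case
    by (rule left.idealI) (simp_all add: ideal_prod_zero ideal_prod_add ideal_prod_uminus
        left.ideal_uminus[OF Suc] ideal_prod_mul_left left.ideal_mul[OF assms])
qed (simp add: left.ideal_UNIV)

lemma ideal_pow_right_ideal:
  assumes "left_ideal A"
  shows "right_ideal (ideal_pow A k)"
proof (induction k)
  case (Suc k)
  show ?case
    by (rule right.idealI) (simp_all add: ideal_prod_zero ideal_prod_add ideal_prod_uminus
        left.ideal_uminus[OF ideal_pow_left_ideal[OF assms]] ideal_prod_mul_right right.ideal_mul[OF Suc])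
qed (simp add: right.ideal_UNIV)

lemma ideal_pow_Suc_induct_left:
  "z \<in> ideal_pow A (Suc k) \<Longrightarrow> 0 \<in> Q \<Longrightarrow> (\<And>x y. x \<in> Q \<Longrightarrow> y \<in> Q \<Longrightarrow> x + y \<in> Q)
    \<Longrightarrow> (\<And>a w. a \<in> A \<Longrightarrow> w \<in> ideal_pow A k \<Longrightarrow> a * w \<in> Q) \<Longrightarrow> z \<in> Q"
  by (simp add: ideal_prod_induct)

lemma ideal_pow_Suc_induct_right:
  assumes "right_ideal A"
  shows "z \<in> ideal_pow A (Suc k) \<Longrightarrow> 0 \<in> Q \<Longrightarrow> (\<And>x y. x \<in> Q \<Longrightarrow> y \<in> Q \<Longrightarrow> x + y \<in> Q)
    \<Longrightarrow> (\<And>a w. a \<in> A \<Longrightarrow> w \<in> ideal_pow A k \<Longrightarrow> w * a \<in> Q) \<Longrightarrow> z \<in> Q"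
proof (induction k arbitrary: z Q)
  case 0
  from 0(1) show ?case
  proof (rule ideal_pow_Suc_induct_left)
    fix a w assume "a \<in> A"
    then show "a * w \<in> Q"
      using 0(4)[of "a * w" 1] right.ideal_mul[OF assms] by simp
  qed (use 0 in simp_all)
next
  case (Suc k)
  from Suc.prems(1) show ?case
  proof (rule ideal_pow_Suc_induct_left)
    fix a w assume a: "a \<in> A" and w: "w \<in> ideal_pow A (Suc k)"
    have "w \<in> {w. a * w \<in> Q}"
      using w
    proof (rule Suc.IH)
      fix b v assume "b \<in> A" "v \<in> ideal_pow A k"
      then show "v * b \<in> {w. a * w \<in> Q}"
        using Suc.prems(4)[of b "a * v"] ideal_prod_mem[OF a] by (simp add: mult.assoc)
    qed (use Suc.prems(2,3) in \<open>simp_all add: distrib_left\<close>)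
    then show "a * w \<in> Q"
      by simp
  qed (use Suc.prems in simp_all)
qed

lemma ideal_pow_mul_Suc:
  assumes "left_ideal A" and "w \<in> ideal_pow A k" and "a \<in> A"
  shows "w * a \<in> ideal_pow A (Suc k)"
  using assms(2)
proof (induction k arbitrary: w)
  case 0
  have "w * a * 1 \<in> ideal_prod A UNIV"
    using left.ideal_mul[OF assms(1,3)] by (rule ideal_prod_mem) simp
  then show ?case
    by simp
next
  case (Suc k)
  have ideal: "left_ideal (ideal_pow A (Suc (Suc k)))"
    using ideal_pow_left_ideal[OF assms(1)] .
  have "w \<in> {z. z * a \<in> ideal_pow A (Suc (Suc k))}"
    using Suc.prems
  proof (rule ideal_pow_Suc_induct_left)
    fix b v assume "b \<in> A" "v \<in> ideal_pow A k"
    then show "b * v \<in> {z. z * a \<in> ideal_pow A (Suc (Suc k))}"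
      using ideal_prod_mem[OF \<open>b \<in> A\<close> Suc.IH[OF \<open>v \<in> ideal_pow A k\<close>]] by (simp add: mult.assoc)
  qed (use ideal left.ideal_zero left.ideal_add in \<open>simp_all add: distrib_right del: ideal_pow.simps\<close>)
  then show ?case
    by simp
qed

lemma power_mem_ideal_pow: "a \<in> A \<Longrightarrow> a ^ k \<in> ideal_pow A k"
  by (induction k) (simp_all add: ideal_prod_mem)

lemma geometric_sum_inverse:
  fixes x :: "'a::ring_1"
  shows "(\<Sum>i<n. x ^ i) * (1 - x) = 1 - x ^ n \<and> (1 - x) * (\<Sum>i<n. x ^ i) = 1 - x ^ n"
proof (induction n)
  case (Suc n)
  have "x ^ n * (1 - x) = x ^ n - x ^ Suc n" "(1 - x) * x ^ n = x ^ n - x ^ Suc n"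
    by (simp_all add: algebra_simps power_commutes)
  with Suc.IH show ?case
    by (simp add: sum.lessThan_Suc distrib_left distrib_right)
qed simp

lemma semiprimary_nilpotent:
  "semiprimary (T :: 'a::ring_1 itself) \<Longrightarrow> ideal_pow (jacobson :: 'a set) (loewy_length_ring T) = {0}"
  unfolding semiprimary_def loewy_length_ring_def by (rule LeastI_ex) blast

lemma loewy_length_least: "ideal_pow (jacobson :: 'a::ring_1 set) n = {0} \<Longrightarrow> loewy_length_ring (T :: 'a itself) \<le> n"
  unfolding loewy_length_ring_def by (rule Least_le)

lemma semiprimary_one_minus_jacobson_unit:
  assumes "semiprimary (T :: 'a::ring_1 itself)" and "j \<in> (jacobson :: 'a set)"
  shows "\<exists>u. u * (1 - j) = 1" and "\<exists>u. (1 - j) * u = 1"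
proof -
  have "j ^ loewy_length_ring T = 0"
    using power_mem_ideal_pow[OF assms(2)] semiprimary_nilpotent[OF assms(1)] by blast
  then have "(\<Sum>i<loewy_length_ring T. j ^ i) * (1 - j) = 1" "(1 - j) * (\<Sum>i<loewy_length_ring T. j ^ i) = 1"
    using geometric_sum_inverse[where x = j and n = "loewy_length_ring T"] by simp_all
  then show "\<exists>u. u * (1 - j) = 1" "\<exists>u. (1 - j) * u = 1"
    by blast+
qed

section \<open>Semisimple quotient rings\<close>

locale semisimple_quotient =
  fixes J :: "'a::ring_1 set"
  assumes J_left_ideal: "left_ideal J" and J_right_ideal: "right_ideal J"
    and J_semisimple: "semisimple_quot left_ideal J UNIV"
begin

lemmas J_zero = left.ideal_zero[OF J_left_ideal]
  and J_add = left.ideal_add[OF J_left_ideal]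
  and J_uminus = left.ideal_uminus[OF J_left_ideal]
  and J_diff = left.ideal_diff[OF J_left_ideal]
  and J_mul_left = left.ideal_mul[OF J_left_ideal]
  and J_mul_right = right.ideal_mul[OF J_right_ideal]

lemma left_complement:
  assumes "left_ideal L" "J \<subseteq> L"
  obtains L' where "left_ideal L'" "J \<subseteq> L'" "L \<inter> L' = J" "ideal_sum L L' = UNIV"
  using J_semisimple assms unfolding semisimple_quot_def by blast

lemma right_unit_mod:
  assumes L: "left_ideal L" "J \<subseteq> L"
  obtains f where "f \<in> L" "\<And>x. x \<in> L \<Longrightarrow> x - x * f \<in> J"
proof -
  obtain L' where L': "left_ideal L'" "L \<inter> L' = J" "ideal_sum L L' = UNIV"
    using left_complement[OF L] by blast
  have "1 \<in> ideal_sum L L'"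
    by (simp add: L'(3))
  then obtain f f' where f: "1 = f + f'" "f \<in> L" "f' \<in> L'"
    unfolding ideal_sum_def by blast
  have "x - x * f \<in> J" if "x \<in> L" for x
  proof -
    have "x - x * f = x * f'"
      using f(1) by (metis add_diff_cancel_left' distrib_left mult.right_neutral)
    moreover have "x * f' \<in> L'" "x - x * f \<in> L"
      using left.ideal_mul[OF L'(1) f(3)] left.ideal_diff[OF L(1) that left.ideal_mul[OF L(1) f(2)]] .
    ultimately show ?thesis
      using L'(2) by auto
  qed
  then show ?thesis
    using that f(2) by blast
qed

lemma regular_mod: obtains y where "a - a * y * a \<in> J"
proof -
  define L where "L = {j + r * a | j r. j \<in> J \<and> r \<in> UNIV}"
  have L: "left_ideal L" "J \<subseteq> L"
    unfolding L_def using left.ideal_add_multiples[OF J_left_ideal left.ideal_UNIV]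
      left.subset_add_multiples[OF left.ideal_UNIV] by blast+
  then obtain f where f: "f \<in> L" "\<And>x. x \<in> L \<Longrightarrow> x - x * f \<in> J"
    using right_unit_mod by blast
  then obtain i y where i: "f = i + y * a" "i \<in> J"
    unfolding L_def by blast
  have "a \<in> L"
    unfolding L_def using J_zero by (intro CollectI exI[of _ 0] exI[of _ 1]) simp
  then have "(a - a * f) + a * i \<in> J"
    using J_add[OF f(2) J_mul_left[OF i(2)]] by blast
  moreover have "(a - a * f) + a * i = a - a * y * a"
    using i(1) by (simp add: algebra_simps)
  ultimately show ?thesis
    using that by metis
qed

lemma ascending_chain_stabilizes:
  assumes M: "\<And>n. left_ideal (M n)" "\<And>n. J \<subseteq> M n" "\<And>n. M n \<subseteq> M (Suc n)"
  obtains N where "M (Suc N) \<subseteq> M N"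
proof -
  have chain: "M m \<subseteq> M n \<or> M n \<subseteq> M m" for m n
    using lift_Suc_mono_le[of M, OF M(3)] by (meson nle_le)
  have "left_ideal (\<Union>(range M))"
    by (rule left.ideal_chain_Union) (use M(1) chain in auto)
  moreover have "J \<subseteq> \<Union>(range M)"
    using M(2) by blast
  ultimately obtain f where f: "f \<in> \<Union>(range M)" "\<And>x. x \<in> \<Union>(range M) \<Longrightarrow> x - x * f \<in> J"
    using right_unit_mod by blast
  then obtain N where "f \<in> M N"
    by blast
  have "x \<in> M N" if "x \<in> M (Suc N)" for x
  proof -
    have "(x - x * f) + x * f \<in> M N"
      using left.ideal_add[OF M(1)] left.ideal_mul[OF M(1) \<open>f \<in> M N\<close>] f(2) M(2) that by blast
    then show ?thesis
      by simp
  qed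
  then show ?thesis
    using that by blast
qed

lemma ideal_sum_Int_subset:
  assumes L: "left_ideal L" "left_ideal L'" "L' \<subseteq> L" "J \<subseteq> L'"
    and "M \<inter> L \<subseteq> J" "L' \<inter> Y \<subseteq> J"
  shows "ideal_sum M (Y \<inter> L) \<inter> L' \<subseteq> J"
proof
  fix z assume z: "z \<in> ideal_sum M (Y \<inter> L) \<inter> L'"
  then obtain m x where mx: "z = m + x" "m \<in> M" "x \<in> Y" "x \<in> L"
    unfolding ideal_sum_def by blast
  have "z - x \<in> L"
    using z L(3) mx(4) by (intro left.ideal_diff[OF L(1)]) auto
  then have "m \<in> J"
    using mx(1,2) assms(5) by auto
  then have "z - m \<in> L'"
    using z L(4) by (intro left.ideal_diff[OF L(2)]) auto
  then have "x \<in> J"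
    using mx(1,3) assms(6) by auto
  then show "z \<in> J"
    using J_add \<open>m \<in> J\<close> mx(1) by blast
qed

text \<open>A strictly descending chain \<open>L\<^sub>n\<close> yields complements \<open>X\<^sub>n\<close> of \<open>L\<^sub>n\<^sub>+\<^sub>1\<close> in \<open>L\<^sub>n\<close> whose partial
  sums \<open>M\<^sub>n = J + X\<^sub>0 + \<dots> + X\<^sub>n\<^sub>-\<^sub>1\<close> meet \<open>L\<^sub>n\<close> only in \<open>J\<close>; they form a strictly
  ascending chain.\<close>
lemma no_strictly_descending_chain:
  assumes L: "\<And>n. left_ideal (L n)" "\<And>n. J \<subseteq> L n" "\<And>n. L (Suc n) \<subset> L n"
  shows False
proof -
  have "\<exists>Y. \<forall>n. left_ideal (Y n) \<and> L (Suc n) \<inter> Y n = J \<and> ideal_sum (L (Suc n)) (Y n) = UNIV"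
    by (intro choice allI) (metis left_complement L(1,2))
  then obtain Y where Y: "\<And>n. left_ideal (Y n)" "\<And>n. L (Suc n) \<inter> Y n = J"
    "\<And>n. ideal_sum (L (Suc n)) (Y n) = UNIV"
    by blast
  define X where "X n = Y n \<inter> L n" for n
  have X: "left_ideal (X n)" for n
    unfolding X_def using Y(1) L(1) by (rule left.ideal_Int)
  define M where "M = rec_nat J (\<lambda>n m. ideal_sum m (X n))"
  have M_0: "M 0 = J" and M_Suc: "M (Suc n) = ideal_sum (M n) (X n)" for n
    unfolding M_def by simp_all
  have M: "left_ideal (M n) \<and> J \<subseteq> M n \<and> M n \<inter> L n = J" for n
  proof (induction n)
    case 0
    then show ?case
      using L(2) by (auto simp: M_0 J_left_ideal)
  next
    case (Suc n)
    then have IH: "left_ideal (M n)" "J \<subseteq> M n" "M n \<inter> L n = J"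
      by auto
    have "M n \<subseteq> M (Suc n)"
      unfolding M_Suc using X by (rule left.ideal_sum_subset_left)
    moreover have "M (Suc n) \<inter> L (Suc n) \<subseteq> J"
      unfolding M_Suc X_def using L(3)[of n] IH(3) Y(2)[of n]
      by (intro ideal_sum_Int_subset[OF L(1) L(1) _ L(2)]) auto
    moreover have "left_ideal (M (Suc n))"
      unfolding M_Suc using IH(1) X by (rule left.ideal_sum)
    ultimately show ?case
      using IH(2) L(2) by blast
  qed
  have "M n \<subseteq> M (Suc n)" for n
    unfolding M_Suc using X by (rule left.ideal_sum_subset_left)
  then obtain N where N: "M (Suc N) \<subseteq> M N"
    using ascending_chain_stabilizes[of M] M by blast
  obtain x where x: "x \<in> L N" "x \<notin> L (Suc N)"
    using L(3)[of N] by blast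
  obtain l y where ly: "x = l + y" "l \<in> L (Suc N)" "y \<in> Y N"
    using Y(3)[of N] unfolding ideal_sum_def by blast
  have "y \<in> L N"
    using left.ideal_diff[OF L(1) x(1), of l] ly L(3)[of N] by auto
  then have "y \<in> M (Suc N)"
    using left.ideal_sum_subset_right[OF conjunct1[OF M]] ly(3) unfolding M_Suc X_def by blast
  then have "y \<in> J"
    using N M[of N] \<open>y \<in> L N\<close> by blast
  then have "x \<in> L (Suc N)"
    using left.ideal_add[OF L(1) ly(2)] L(2) ly(1) by blast
  with x(2) show False ..
qed

lemma exists_minimal:
  assumes "F \<noteq> {}" and "\<And>L. L \<in> F \<Longrightarrow> left_ideal L \<and> J \<subseteq> L"
  obtains L where "L \<in> F" "\<And>L'. L' \<in> F \<Longrightarrow> L' \<subseteq> L \<Longrightarrow> L' = L"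
proof -
  have "\<exists>L\<in>F. \<forall>L'\<in>F. L' \<subseteq> L \<longrightarrow> L' = L"
  proof (rule ccontr)
    assume "\<not> ?thesis"
    then have descend: "\<exists>L'. L' \<in> F \<and> L' \<subset> L" if "L \<in> F" for L
      using that by blast
    have "\<exists>f. \<forall>n. f n \<in> F \<and> f (Suc n) \<subset> f n"
    proof (rule dependent_nat_choice)
      show "\<exists>L. L \<in> F"
        using assms(1) by blast
    qed (use descend in blast)
    then obtain f where f: "\<And>n. f n \<in> F" "\<And>n. f (Suc n) \<subset> f n"
      by blast
    show False
      by (rule no_strictly_descending_chain[of f]) (simp_all add: f assms(2))
  qed
  then show ?thesis
    using that by blast
qed

lemma idempotent_mod_join:
  assumes e: "e * e - e \<in> J" and h: "h * h - h \<in> J" and eh: "e * h \<in> J"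
  defines "g \<equiv> e + h - h * e"
  shows "g * e - e \<in> J" and "g * h - h \<in> J" and "g * g - g \<in> J"
proof -
  have "g * e - e = (e * e - e) - h * (e * e - e)"
    unfolding g_def by (simp add: algebra_simps)
  then show ge: "g * e - e \<in> J"
    using J_diff[OF e J_mul_left[OF e]] by (simp only:)
  have "g * h - h = e * h + (h * h - h) - h * (e * h)"
    unfolding g_def by (simp add: algebra_simps)
  then show gh: "g * h - h \<in> J"
    using J_diff[OF J_add[OF eh h] J_mul_left[OF eh]] by (simp only:)
  have "g * g - g = (g * e - e) + (g * h - h) - (g * h - h) * e"
    by (simp add: g_def algebra_simps)
  then show "g * g - g \<in> J"
    using J_diff[OF J_add[OF ge gh] J_mul_right[OF gh]] by (simp only:)
qed

text \<open>Given \<open>k \<in> K\<close>, the idempotent \<open>g = e + h - h e\<close> built from a quasi-inverse of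
  \<open>x = k - e k\<close> satisfies \<open>g e \<equiv> e\<close>, so its left annihilator lies in that of \<open>e\<close>;
  minimality then forces \<open>e g \<equiv> g\<close>, and \<open>k \<equiv> e (k + g h x)\<close> modulo \<open>J\<close>.\<close>
lemma minimal_idempotent_generates:
  assumes K: "right_ideal K" and e: "e \<in> K" "e * e - e \<in> J"
    and minimal: "\<And>g. g \<in> K \<Longrightarrow> g * g - g \<in> J \<Longrightarrow> {x. x * g \<in> J} \<subseteq> {x. x * e \<in> J}
      \<Longrightarrow> {x. x * g \<in> J} = {x. x * e \<in> J}"
    and k: "k \<in> K"
  obtains r where "k - e * r \<in> J"
proof -
  define x where "x = k - e * k"
  have x: "x \<in> K"
    unfolding x_def using right.ideal_diff[OF K k right.ideal_mul[OF K e(1)]] .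
  obtain y where y: "x - x * y * x \<in> J"
    using regular_mod by blast
  define h where "h = x * y"
  define g where "g = e + h - h * e"
  have h: "h \<in> K"
    unfolding h_def using right.ideal_mul[OF K x] .
  have g: "g \<in> K"
    unfolding g_def using right.ideal_diff[OF K right.ideal_add[OF K e(1) h] right.ideal_mul[OF K h]] .
  have ee: "e - e * e \<in> J"
    using J_uminus[OF e(2)] by simp
  have "e * h = (e - e * e) * k * y"
    unfolding h_def x_def by (simp add: algebra_simps)
  then have eh: "e * h \<in> J"
    using J_mul_right[OF J_mul_right[OF ee]] by simp
  have "h * h - h = - ((x - x * y * x) * y)"
    unfolding h_def by (simp add: algebra_simps)
  then have hh: "h * h - h \<in> J"
    using J_uminus[OF J_mul_right[OF y]] by simp
  have hx: "x - h * x \<in> J"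
    unfolding h_def using y by (simp add: mult.assoc)
  have ge: "g * e - e \<in> J" and gh: "g * h - h \<in> J" and gg: "g * g - g \<in> J"
    unfolding g_def using idempotent_mod_join[OF e(2) hh eh] by blast+
  have "{z. z * g \<in> J} \<subseteq> {z. z * e \<in> J}"
  proof
    fix z assume "z \<in> {z. z * g \<in> J}"
    then have "(z * g) * e - z * (g * e - e) \<in> J"
      using J_diff[OF J_mul_right J_mul_left[OF ge]] by simp
    then show "z \<in> {z. z * e \<in> J}"
      by (simp add: algebra_simps)
  qed
  then have annihilators: "{z. z * g \<in> J} = {z. z * e \<in> J}"
    using minimal[OF g gg] by blast
  have "(1 - e) * e \<in> J"
    using ee by (simp add: algebra_simps)
  then have "(1 - e) * g \<in> J"
    using annihilators by blast
  then have egg: "g - e * g \<in> J"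
    by (simp add: algebra_simps)
  have "h - g * h \<in> J"
    using J_uminus[OF gh] by simp
  then have "(x - h * x) + (h - g * h) * x + (g - e * g) * (h * x) \<in> J"
    using J_add[OF J_add[OF hx J_mul_right] J_mul_right[OF egg]] by blast
  moreover have "(x - h * x) + (h - g * h) * x + (g - e * g) * (h * x) = k - e * (k + g * h * x)"
    unfolding x_def by (simp add: algebra_simps)
  ultimately show ?thesis
    using that by metis
qed

lemma complement_of_idempotent_generated:
  assumes K: "right_ideal K" "J \<subseteq> K" and e: "e \<in> K" "e * e - e \<in> J"
    and generates: "\<And>k. k \<in> K \<Longrightarrow> \<exists>r. k - e * r \<in> J"
  shows "\<exists>K'. right_ideal K' \<and> J \<subseteq> K' \<and> K \<inter> K' = J \<and> ideal_sum K K' = UNIV"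
proof (intro exI conjI)
  let ?K' = "{z. e * z \<in> J}"
  have ee: "e - e * e \<in> J"
    using J_uminus[OF e(2)] by simp
  show "right_ideal ?K'"
    using J_right_ideal by (rule right.ideal_colon)
  show "J \<subseteq> ?K'"
    using J_mul_left by blast
  have "K \<inter> ?K' \<subseteq> J"
  proof
    fix z assume z: "z \<in> K \<inter> ?K'"
    then obtain r where r: "z - e * r \<in> J"
      using generates by blast
    have "(e - e * e) * r + (e * z - e * (z - e * r)) \<in> J"
      using J_add[OF J_mul_right[OF ee] J_diff[OF _ J_mul_left[OF r]]] z by simp
    then have "e * r \<in> J"
      by (simp add: algebra_simps)
    then show "z \<in> J"
      using J_add[OF r] by force
  qed
  then show "K \<inter> ?K' = J"
    using K(2) J_mul_left by blast
  have "z \<in> ideal_sum K ?K'" for z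
  proof -
    have "e * (z - e * z) = (e - e * e) * z"
      by (simp add: algebra_simps)
    then have "z - e * z \<in> ?K'"
      using J_mul_right[OF ee] by simp
    moreover have "e * z \<in> K"
      using right.ideal_mul[OF K(1) e(1)] .
    ultimately have "e * z + (z - e * z) \<in> ideal_sum K ?K'"
      unfolding ideal_sum_def by blast
    then show ?thesis
      by simp
  qed
  then show "ideal_sum K ?K' = UNIV"
    by blast
qed

lemma right_complement:
  assumes K: "right_ideal K" "J \<subseteq> K"
  shows "\<exists>K'. right_ideal K' \<and> J \<subseteq> K' \<and> K \<inter> K' = J \<and> ideal_sum K K' = UNIV"
proof -
  define F where "F = {{x. x * e \<in> J} | e. e \<in> K \<and> e * e - e \<in> J}"
  have "{x. x * 0 \<in> J} \<in> F"
    unfolding F_def using right.ideal_zero[OF K(1)] J_zero by force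
  moreover have "left_ideal L \<and> J \<subseteq> L" if "L \<in> F" for L
    using that J_mul_right left.ideal_colon[OF J_left_ideal] unfolding F_def by blast
  ultimately obtain L where L: "L \<in> F" "\<And>L'. L' \<in> F \<Longrightarrow> L' \<subseteq> L \<Longrightarrow> L' = L"
    using exists_minimal[of F] by blast
  then obtain e where e: "L = {x. x * e \<in> J}" "e \<in> K" "e * e - e \<in> J"
    unfolding F_def by blast
  have "\<exists>r. k - e * r \<in> J" if "k \<in> K" for k
  proof (rule minimal_idempotent_generates[OF K(1) e(2,3) _ that])
    fix g assume "g \<in> K" "g * g - g \<in> J" "{x. x * g \<in> J} \<subseteq> {x. x * e \<in> J}"
    then show "{x. x * g \<in> J} = {x. x * e \<in> J}"
      using L(2)[of "{x. x * g \<in> J}"] unfolding e(1) F_def by blast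
  qed blast
  then show ?thesis
    using complement_of_idempotent_generated[OF K e(2,3)] by blast
qed

theorem right_semisimple: "semisimple_quot right_ideal J UNIV"
  unfolding semisimple_quot_def using right_complement by blast

end

lemma semiprimary_semisimple_quotient:
  "semiprimary (T :: 'a::ring_1 itself) \<Longrightarrow> semisimple_quotient (jacobson :: 'a set)"
  unfolding semiprimary_def by unfold_locales (simp_all add: jacobson_left_ideal jacobson_right_ideal)

section \<open>Rigidity and the Jacobson systems\<close>

lemma semiprimary_radical_layers_left:
  assumes "semiprimary (T :: 'a::ring_1 itself)"
  shows "radical_layers (*) (jacobson :: 'a set) (ideal_pow jacobson) (loewy_length_ring T)"
proof unfold_locales
  show "z \<in> Q" if "z \<in> ideal_pow jacobson (Suc k)" "0 \<in> Q" "\<And>a b. a \<in> Q \<Longrightarrow> b \<in> Q \<Longrightarrow> a + b \<in> Q"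
    "\<And>j w. j \<in> jacobson \<Longrightarrow> w \<in> ideal_pow jacobson k \<Longrightarrow> j * w \<in> Q" for z k and Q :: "'a set"
    using that by (rule ideal_pow_Suc_induct_left)
  show "z \<in> Q" if "z \<in> ideal_pow jacobson (Suc k)" "0 \<in> Q" "\<And>a b. a \<in> Q \<Longrightarrow> b \<in> Q \<Longrightarrow> a + b \<in> Q"
    "\<And>j w. j \<in> jacobson \<Longrightarrow> w \<in> ideal_pow jacobson k \<Longrightarrow> w * j \<in> Q" for z k and Q :: "'a set"
    using that by (rule ideal_pow_Suc_induct_right[OF jacobson_right_ideal])
qed (use assms in \<open>simp_all add: left_ideal_wrt_times ideal_pow_left_ideal[OF jacobson_left_ideal]
    jacobson_left_ideal semiprimary_def semiprimary_nilpotent loewy_length_least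
    semiprimary_one_minus_jacobson_unit ideal_prod_mem ideal_pow_mul_Suc[OF jacobson_left_ideal, simplified]
    right.ideal_mul[OF ideal_pow_right_ideal[OF jacobson_left_ideal]]\<close>)

lemma semiprimary_radical_layers_right:
  assumes "semiprimary (T :: 'a::ring_1 itself)"
  shows "radical_layers (\<lambda>a b. b * a) (jacobson :: 'a set) (ideal_pow jacobson) (loewy_length_ring T)"
proof unfold_locales
  show "z \<in> Q" if "z \<in> ideal_pow jacobson (Suc k)" "0 \<in> Q" "\<And>a b. a \<in> Q \<Longrightarrow> b \<in> Q \<Longrightarrow> a + b \<in> Q"
    "\<And>j w. j \<in> jacobson \<Longrightarrow> w \<in> ideal_pow jacobson k \<Longrightarrow> w * j \<in> Q" for z k and Q :: "'a set"
    using that by (rule ideal_pow_Suc_induct_right[OF jacobson_right_ideal])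
  show "z \<in> Q" if "z \<in> ideal_pow jacobson (Suc k)" "0 \<in> Q" "\<And>a b. a \<in> Q \<Longrightarrow> b \<in> Q \<Longrightarrow> a + b \<in> Q"
    "\<And>j w. j \<in> jacobson \<Longrightarrow> w \<in> ideal_pow jacobson k \<Longrightarrow> j * w \<in> Q" for z k and Q :: "'a set"
    using that by (rule ideal_pow_Suc_induct_left)
  show "semisimple_quot (left_ideal_wrt (\<lambda>a b. b * a)) (jacobson :: 'a set) UNIV"
    unfolding left_ideal_wrt_flip
    using semiprimary_semisimple_quotient[OF assms] by (rule semisimple_quotient.right_semisimple)
qed (use assms in \<open>simp_all add: left_ideal_wrt_flip ideal_pow_right_ideal[OF jacobson_left_ideal]
    jacobson_right_ideal semiprimary_nilpotent loewy_length_least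
    semiprimary_one_minus_jacobson_unit ideal_prod_mem ideal_pow_mul_Suc[OF jacobson_left_ideal, simplified]
    left.ideal_mul[OF ideal_pow_left_ideal[OF jacobson_left_ideal]]\<close>)

definition left_annihilator :: "'a::ring_1 set \<Rightarrow> 'a set" where
  "left_annihilator S = {x. \<forall>y\<in>S. x * y = 0}"

definition right_annihilator :: "'a::ring_1 set \<Rightarrow> 'a set" where
  "right_annihilator S = {x. \<forall>y\<in>S. y * x = 0}"

lemma left_annihilator_eq: "{x. (\<lambda>y. x * y) ` S \<subseteq> {0}} = left_annihilator S"
  and right_annihilator_eq: "{x. (\<lambda>y. y * x) ` S \<subseteq> {0}} = right_annihilator S"
  unfolding left_annihilator_def right_annihilator_def by blast+

lemma left_ideal_left_multipliers: "left_ideal I \<Longrightarrow> {x. (\<lambda>y. y * x) ` UNIV \<subseteq> I} = I"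
  using left.ideal_mul mult_1_left by (metis (no_types, lifting) UNIV_I image_subset_iff mem_Collect_eq subsetI subset_antisym)

lemma right_ideal_right_multipliers: "right_ideal I \<Longrightarrow> {x. (\<lambda>y. x * y) ` UNIV \<subseteq> I} = I"
  using right.ideal_mul mult_1_right by (metis (no_types, lifting) UNIV_I image_subset_iff mem_Collect_eq subsetI subset_antisym)

lemma annihilators_iff_dual_multiplier_sets:
  fixes P :: "nat \<Rightarrow> 'a::ring_1 set"
  assumes left: "\<And>k. left_ideal (P k)" and right: "\<And>k. right_ideal (P k)"
    and P_0: "P 0 = UNIV" and P_d: "P d = {0}"
  shows "((\<forall>k\<le>d. right_annihilator (P k) = P (d - k)) \<and> (\<forall>k\<le>d. left_annihilator (P k) = P (d - k)))
    \<longleftrightarrow> (\<forall>i\<in>{1..d + 1}. \<forall>j\<in>{1..d + 1}.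
          {x. (\<lambda>y. x * y) ` P (i - 1) \<subseteq> P (j - 1)} = {x. (\<lambda>y. y * x) ` P (d + 1 - j) \<subseteq> P (d + 1 - i)})"
proof
  assume "(\<forall>k\<le>d. right_annihilator (P k) = P (d - k)) \<and> (\<forall>k\<le>d. left_annihilator (P k) = P (d - k))"
  then have right_ann: "\<And>k. k \<le> d \<Longrightarrow> P (d - k) = right_annihilator (P k)"
    and left_ann: "\<And>k. k \<le> d \<Longrightarrow> P (d - k) = left_annihilator (P k)"
    by auto
  show "\<forall>i\<in>{1..d + 1}. \<forall>j\<in>{1..d + 1}.
    {x. (\<lambda>y. x * y) ` P (i - 1) \<subseteq> P (j - 1)} = {x. (\<lambda>y. y * x) ` P (d + 1 - j) \<subseteq> P (d + 1 - i)}"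
  proof (intro ballI)
    fix i j assume "i \<in> {1..d + 1}" "j \<in> {1..d + 1}"
    then have "d + 1 - j \<le> d" "d - (d + 1 - j) = j - 1" "i - 1 \<le> d" "d - (i - 1) = d + 1 - i"
      by auto
    then have "P (j - 1) = right_annihilator (P (d + 1 - j))" "P (d + 1 - i) = left_annihilator (P (i - 1))"
      using right_ann[of "d + 1 - j"] left_ann[of "i - 1"] by simp_all
    then show "{x. (\<lambda>y. x * y) ` P (i - 1) \<subseteq> P (j - 1)} = {x. (\<lambda>y. y * x) ` P (d + 1 - j) \<subseteq> P (d + 1 - i)}"
      by (auto simp: left_annihilator_def right_annihilator_def mult.assoc)
  qed
next
  assume H: "\<forall>i\<in>{1..d + 1}. \<forall>j\<in>{1..d + 1}.
    {x. (\<lambda>y. x * y) ` P (i - 1) \<subseteq> P (j - 1)} = {x. (\<lambda>y. y * x) ` P (d + 1 - j) \<subseteq> P (d + 1 - i)}"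
  have "left_annihilator (P k) = P (d - k)" if "k \<le> d" for k
    using H[rule_format, of "Suc k" "d + 1"] that
    by (simp add: P_0 P_d left_annihilator_eq left_ideal_left_multipliers[OF left])
  moreover have "right_annihilator (P k) = P (d - k)" if "k \<le> d" for k
    using H[rule_format, of 1 "d + 1 - k"] that
    by (simp add: P_0 P_d right_annihilator_eq right_ideal_right_multipliers[OF right])
  ultimately show "(\<forall>k\<le>d. right_annihilator (P k) = P (d - k)) \<and> (\<forall>k\<le>d. left_annihilator (P k) = P (d - k))"
    by blast
qed

lemma dual_jacobson_system:
  assumes "i \<in> {1..loewy_length_ring T + 1}" "j \<in> {1..loewy_length_ring T + 1}"
  shows "dual_system (loewy_length_ring T) (jacobson_system T) i j
    = {x. (\<lambda>y. x * y) ` ideal_pow (jacobson :: 'a::ring_1 set) (i - 1) \<subseteq> ideal_pow jacobson (j - 1)}"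
  using assms by (simp add: dual_system_def jacobson_system_def Let_def)

theorem proposition2p9:
  fixes T :: "'a::ring_1 itself"
  assumes "semiprimary T"
  shows "rigid_ring T \<longleftrightarrow>
    (\<forall>i\<in>{1..loewy_length_ring T + 1}. \<forall>j\<in>{1..loewy_length_ring T + 1}.
       dual_system (loewy_length_ring T) (jacobson_system T) i j = jacobson_system_op T i j)"
proof -
  define d where "d = loewy_length_ring T"
  interpret left_layers: radical_layers "(*)" "jacobson :: 'a set" "ideal_pow jacobson" d
    unfolding d_def using assms by (rule semiprimary_radical_layers_left)
  interpret right_layers: radical_layers "\<lambda>a b. b * a" "jacobson :: 'a set" "ideal_pow jacobson" d
    unfolding d_def using assms by (rule semiprimary_radical_layers_right)
  have "rigid_ring T \<longleftrightarrow>
      (\<forall>k\<le>d. right_annihilator (ideal_pow jacobson k) = ideal_pow (jacobson :: 'a set) (d - k)) \<and>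
      (\<forall>k\<le>d. left_annihilator (ideal_pow jacobson k) = ideal_pow (jacobson :: 'a set) (d - k))"
    unfolding rigid_ring_def left_ideal_wrt_times[symmetric] left_ideal_wrt_flip[symmetric]
      left_layers.rigid_module_iff right_layers.rigid_module_iff
    by (simp add: left_layers.socle_def right_layers.socle_def left_annihilator_def right_annihilator_def)
  also have "\<dots> \<longleftrightarrow> (\<forall>i\<in>{1..d + 1}. \<forall>j\<in>{1..d + 1}.
      {x. (\<lambda>y. x * y) ` ideal_pow jacobson (i - 1) \<subseteq> ideal_pow (jacobson :: 'a set) (j - 1)}
      = {x. (\<lambda>y. y * x) ` ideal_pow jacobson (d + 1 - j) \<subseteq> ideal_pow jacobson (d + 1 - i)})"
    using ideal_pow_left_ideal[OF jacobson_left_ideal] ideal_pow_right_ideal[OF jacobson_left_ideal]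
      left_layers.layer_nilpotent
    by (intro annihilators_iff_dual_multiplier_sets) simp_all
  also have "\<dots> \<longleftrightarrow> (\<forall>i\<in>{1..d + 1}. \<forall>j\<in>{1..d + 1}.
      dual_system d (jacobson_system T) i j = jacobson_system_op T i j)"
    unfolding d_def
    by (intro ball_cong refl) (simp only: dual_jacobson_system jacobson_system_op_def Let_def)
  finally show ?thesis
    unfolding d_def .
qed

end
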